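(* Let $A,B$ be finite groups. (1) If $B$ is SMP, then $A\times B$ is MP if and only if $A$ is MP. (2) $A\times B$ is SMP if and only if both $A$ and $B$ are SMP.
   Context: A group $G$ has the Magnus Property (MP) if whenever $x,y\in G$ have the same normal closure in $G$, $x$ is conjugate in $G$ to $y$ or to $y^{-1}$; it has the Strong Magnus Property (SMP) if whenever $x,y\in G$ have the same normal closure, $x$ is conjugate to $y$. *)

theory Defs
  imports "HOL-Algebra.Algebra"
begin

definition normal_closure :: "('a, 'c) monoid_scheme \<Rightarrow> 'a set \<Rightarrow> 'a set" where
  "normal_closure G S = \<Inter> {N. N \<lhd> G \<and> S \<subseteq> N}"

definition conj_in :: "('a, 'c) monoid_scheme \<Rightarrow> 'a \<Rightarrow> 'a \<Rightarrow> bool" where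
  "conj_in G x y \<longleftrightarrow> (\<exists>g \<in> carrier G. y = g \<otimes>\<^bsub>G\<^esub> x \<otimes>\<^bsub>G\<^esub> inv\<^bsub>G\<^esub> g)"

definition magnus_property :: "('a, 'c) monoid_scheme \<Rightarrow> bool" where
  "magnus_property G \<longleftrightarrow> (\<forall>x \<in> carrier G. \<forall>y \<in> carrier G.
     normal_closure G {x} = normal_closure G {y} \<longrightarrow>
       conj_in G x y \<or> conj_in G x (inv\<^bsub>G\<^esub> y))"

definition strong_magnus_property :: "('a, 'c) monoid_scheme \<Rightarrow> bool" where
  "strong_magnus_property G \<longleftrightarrow> (\<forall>x \<in> carrier G. \<forall>y \<in> carrier G.
     normal_closure G {x} = normal_closure G {y} \<longrightarrow> conj_in G x y)"

end

theory Submission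
  imports Defs
begin

text \<open>
  A is a retract of A \<times> B (via a \<mapsto> (a, 1) and the projection), and both Magnus
  properties pass to retracts: homomorphisms preserve conjugacy, and they preserve equality of
  normal closures because preimages of normal subgroups are normal. Conversely, equal normal
  closures in A \<times> B project to equal normal closures in each factor, and conjugacy in A \<times> B
  is componentwise. For the Magnus property the B-component must then be conjugate to b' and to
  b'\<inverse> at once; this holds when B has the strong Magnus property, since there every element
  is conjugate to its inverse.
\<close>

lemma normal_closure_singleton_eq_iff:
  "normal_closure G {x} = normal_closure G {y} \<longleftrightarrow> (\<forall>N. N \<lhd> G \<longrightarrow> (x \<in> N \<longleftrightarrow> y \<in> N))"
proof
  assume eq: "normal_closure G {x} = normal_closure G {y}"
  have mem: "z \<in> normal_closure G {z}"
    and least: "z \<in> N \<Longrightarrow> N \<lhd> G \<Longrightarrow> normal_closure G {z} \<subseteq> N" for z N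
    unfolding normal_closure_def by auto
  show "\<forall>N. N \<lhd> G \<longrightarrow> (x \<in> N \<longleftrightarrow> y \<in> N)"
    using mem[of x] mem[of y] least[of x] least[of y] eq by blast
next
  assume "\<forall>N. N \<lhd> G \<longrightarrow> (x \<in> N \<longleftrightarrow> y \<in> N)"
  then have "{N. N \<lhd> G \<and> {x} \<subseteq> N} = {N. N \<lhd> G \<and> {y} \<subseteq> N}"
    by auto
  then show "normal_closure G {x} = normal_closure G {y}"
    unfolding normal_closure_def by simp
qed

lemma (in group_hom) normal_vimage:
  assumes "N \<lhd> H"
  shows "{x \<in> carrier G. h x \<in> N} \<lhd> G"
proof -
  interpret N: normal N H by fact
  have "subgroup {x \<in> carrier G. h x \<in> N} G"
    by (rule G.subgroupI) (auto simp: N.one_closed N.m_inv_closed N.m_closed)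
  moreover have "h (g \<otimes> x \<otimes> inv g) \<in> N" if "g \<in> carrier G" "x \<in> carrier G" "h x \<in> N" for g x
    using that N.inv_op_closed2 by simp
  ultimately show ?thesis
    by (auto simp: G.normal_inv_iff)
qed

lemma (in group_hom) normal_closure_singleton_eq_image:
  assumes "x \<in> carrier G" "y \<in> carrier G" "normal_closure G {x} = normal_closure G {y}"
  shows "normal_closure H {h x} = normal_closure H {h y}"
  using assms normal_vimage unfolding normal_closure_singleton_eq_iff by blast

lemma (in group) normal_closure_singleton_inv:
  assumes "x \<in> carrier G"
  shows "normal_closure G {inv x} = normal_closure G {x}"
  using assms normal_imp_subgroup subgroup.m_inv_closed
  unfolding normal_closure_singleton_eq_iff by (metis inv_inv)

lemma (in group) conj_in_trans:
  assumes "x \<in> carrier G" "conj_in G x y" "conj_in G y z"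
  shows "conj_in G x z"
proof -
  obtain g where g: "g \<in> carrier G" "y = g \<otimes> x \<otimes> inv g"
    using assms(2) conj_in_def by metis
  obtain k where k: "k \<in> carrier G" "z = k \<otimes> y \<otimes> inv k"
    using assms(3) conj_in_def by metis
  have "z = (k \<otimes> g) \<otimes> x \<otimes> inv (k \<otimes> g)"
    using g k assms(1) by (simp add: inv_mult_group m_assoc)
  with g k show ?thesis
    unfolding conj_in_def by blast
qed

lemma (in group_hom) conj_in_image:
  assumes "x \<in> carrier G" "conj_in G x y"
  shows "conj_in H (h x) (h y)"
  using assms unfolding conj_in_def by auto

lemma conj_in_DirProd_iff:
  assumes "group A" "group B" "a \<in> carrier A" "b \<in> carrier B"
  shows "conj_in (A \<times>\<times> B) (a, b) (c, d) \<longleftrightarrow> conj_in A a c \<and> conj_in B b d"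
  using assms group.inv_closed unfolding conj_in_def by fastforce

lemma (in group) strong_magnus_property_imp_conj_in_inv:
  assumes "strong_magnus_property G" "x \<in> carrier G"
  shows "conj_in G x (inv x)"
  using assms normal_closure_singleton_inv unfolding strong_magnus_property_def by simp

lemma magnus_property_retract:
  assumes "group_hom G H s" "group_hom H G r" "\<And>x. x \<in> carrier G \<Longrightarrow> r (s x) = x"
    and "magnus_property H"
  shows "magnus_property G"
  unfolding magnus_property_def
proof (intro ballI impI)
  interpret s: group_hom G H s by fact
  interpret r: group_hom H G r by fact
  fix x y
  assume x: "x \<in> carrier G" and y: "y \<in> carrier G"
    and "normal_closure G {x} = normal_closure G {y}"
  then have "normal_closure H {s x} = normal_closure H {s y}"
    by (rule s.normal_closure_singleton_eq_image)
  with assms(4) x y have "conj_in H (s x) (s y) \<or> conj_in H (s x) (inv\<^bsub>H\<^esub> s y)"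
    unfolding magnus_property_def by simp
  then have "conj_in G (r (s x)) (r (s y)) \<or> conj_in G (r (s x)) (r (inv\<^bsub>H\<^esub> s y))"
    using x r.conj_in_image by auto
  with x y assms(3) show "conj_in G x y \<or> conj_in G x (inv\<^bsub>G\<^esub> y)"
    by simp
qed

lemma strong_magnus_property_retract:
  assumes "group_hom G H s" "group_hom H G r" "\<And>x. x \<in> carrier G \<Longrightarrow> r (s x) = x"
    and "strong_magnus_property H"
  shows "strong_magnus_property G"
  unfolding strong_magnus_property_def
proof (intro ballI impI)
  interpret s: group_hom G H s by fact
  interpret r: group_hom H G r by fact
  fix x y
  assume x: "x \<in> carrier G" and y: "y \<in> carrier G"
    and "normal_closure G {x} = normal_closure G {y}"
  then have "normal_closure H {s x} = normal_closure H {s y}"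
    by (rule s.normal_closure_singleton_eq_image)
  with assms(4) x y have "conj_in H (s x) (s y)"
    unfolding strong_magnus_property_def by simp
  then have "conj_in G (r (s x)) (r (s y))"
    using x r.conj_in_image by auto
  with x y assms(3) show "conj_in G x y"
    by simp
qed

lemma group_hom_DirProd_fst: "group A \<Longrightarrow> group B \<Longrightarrow> group_hom (A \<times>\<times> B) A fst"
  by (auto simp: group_hom_def group_hom_axioms_def hom_def DirProd_group)

lemma group_hom_DirProd_snd: "group A \<Longrightarrow> group B \<Longrightarrow> group_hom (A \<times>\<times> B) B snd"
  by (auto simp: group_hom_def group_hom_axioms_def hom_def DirProd_group)

lemma group_hom_DirProd_left: "group A \<Longrightarrow> group B \<Longrightarrow> group_hom A (A \<times>\<times> B) (\<lambda>a. (a, \<one>\<^bsub>B\<^esub>))"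
  by (auto simp: group_hom_def group_hom_axioms_def hom_def DirProd_group group.is_monoid)

lemma group_hom_DirProd_right: "group A \<Longrightarrow> group B \<Longrightarrow> group_hom B (A \<times>\<times> B) (\<lambda>b. (\<one>\<^bsub>A\<^esub>, b))"
  by (auto simp: group_hom_def group_hom_axioms_def hom_def DirProd_group group.is_monoid)

lemma normal_closure_singleton_eq_DirProd:
  assumes "group A" "group B" "a \<in> carrier A" "b \<in> carrier B" "a' \<in> carrier A" "b' \<in> carrier B"
    and "normal_closure (A \<times>\<times> B) {(a, b)} = normal_closure (A \<times>\<times> B) {(a', b')}"
  shows "normal_closure A {a} = normal_closure A {a'}" "normal_closure B {b} = normal_closure B {b'}"
  using group_hom.normal_closure_singleton_eq_image[OF group_hom_DirProd_fst[OF assms(1,2)] _ _ assms(7)]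
    group_hom.normal_closure_singleton_eq_image[OF group_hom_DirProd_snd[OF assms(1,2)] _ _ assms(7)]
    assms(3-6)
  by simp_all

lemma magnus_property_DirProd:
  assumes "group A" "group B" "magnus_property A" "strong_magnus_property B"
  shows "magnus_property (A \<times>\<times> B)"
  unfolding magnus_property_def carrier_DirProd split_paired_Ball_Sigma
proof (intro ballI impI)
  fix a b a' b'
  assume ab: "a \<in> carrier A" "b \<in> carrier B" and ab': "a' \<in> carrier A" "b' \<in> carrier B"
    and eq: "normal_closure (A \<times>\<times> B) {(a, b)} = normal_closure (A \<times>\<times> B) {(a', b')}"
  note same = normal_closure_singleton_eq_DirProd[OF assms(1,2) ab ab' eq]
  have "conj_in A a a' \<or> conj_in A a (inv\<^bsub>A\<^esub> a')"
    using assms(3) ab ab' same(1) unfolding magnus_property_def by simp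
  moreover have "conj_in B b b'"
    using assms(4) ab ab' same(2) unfolding strong_magnus_property_def by simp
  moreover from this have "conj_in B b (inv\<^bsub>B\<^esub> b')"
    using group.conj_in_trans[OF assms(2) ab(2)]
      group.strong_magnus_property_imp_conj_in_inv[OF assms(2,4) ab'(2)] by simp
  ultimately show "conj_in (A \<times>\<times> B) (a, b) (a', b')
      \<or> conj_in (A \<times>\<times> B) (a, b) (inv\<^bsub>A \<times>\<times> B\<^esub> (a', b'))"
    using ab ab' assms(1,2) by (simp add: conj_in_DirProd_iff)
qed

lemma strong_magnus_property_DirProd:
  assumes "group A" "group B" "strong_magnus_property A" "strong_magnus_property B"
  shows "strong_magnus_property (A \<times>\<times> B)"
  unfolding strong_magnus_property_def carrier_DirProd split_paired_Ball_Sigma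
proof (intro ballI impI)
  fix a b a' b'
  assume ab: "a \<in> carrier A" "b \<in> carrier B" and ab': "a' \<in> carrier A" "b' \<in> carrier B"
    and eq: "normal_closure (A \<times>\<times> B) {(a, b)} = normal_closure (A \<times>\<times> B) {(a', b')}"
  from normal_closure_singleton_eq_DirProd[OF assms(1,2) ab ab' eq]
  have "conj_in A a a'" "conj_in B b b'"
    using assms(3,4) ab ab' unfolding strong_magnus_property_def by simp_all
  then show "conj_in (A \<times>\<times> B) (a, b) (a', b')"
    using ab assms(1,2) by (simp add: conj_in_DirProd_iff)
qed

theorem proposition4p2:
  fixes A :: "'a monoid" and B :: "'b monoid"
  assumes "group A" and "group B"
    and "finite (carrier A)" and "finite (carrier B)"
  shows "(strong_magnus_property B \<longrightarrow>
            (magnus_property (A \<times>\<times> B) \<longleftrightarrow> magnus_property A))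
       \<and> (strong_magnus_property (A \<times>\<times> B) \<longleftrightarrow>
            strong_magnus_property A \<and> strong_magnus_property B)"
proof -
  note left = group_hom_DirProd_left[OF assms(1,2)] group_hom_DirProd_fst[OF assms(1,2)]
  note right = group_hom_DirProd_right[OF assms(1,2)] group_hom_DirProd_snd[OF assms(1,2)]
  have "magnus_property (A \<times>\<times> B) \<Longrightarrow> magnus_property A"
    by (rule magnus_property_retract[OF left]) simp
  moreover have "strong_magnus_property (A \<times>\<times> B) \<Longrightarrow> strong_magnus_property A"
    by (rule strong_magnus_property_retract[OF left]) simp
  moreover have "strong_magnus_property (A \<times>\<times> B) \<Longrightarrow> strong_magnus_property B"
    by (rule strong_magnus_property_retract[OF right]) simp
  ultimately show ?thesis
    using magnus_property_DirProd[OF assms(1,2)] strong_magnus_property_DirProd[OF assms(1,2)]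
    by blast
qed

end
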